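(* Let $k \geq 1$ and let $G_0,\dots,G_{k-1}$ be bipartite graphs such that for all $i \neq j$ in $\{0,\dots,k-1\}$, $V(G_i)\cap V(G_j) = \{g\}$ for a single common vertex $g$. Let $G = \bigcup_{i=0}^{k-1} G_i$ (vertex set $\bigcup_i V(G_i)$, edge set $\bigcup_i E(G_i)$). Suppose that for each $i$, $\phi_{G_i}$ is a well-begun $l_i$-encoding of $G_i$. Then $G$ has a well-begun $l$-encoding, where $l = \max_{0\le i\le k-1} l_i + \lceil \log_2 k \rceil$.
   Context: For a graph $G=(V,E)$ and $l\in\mathbb{N}$, an $l$-encoding of $G$ is a function $\phi: V \to \mathbb{N}^l$ such that $\phi$ is injective and for all $u,v \in V$, $\{u,v\}\in E$ if and only if $\phi(u)$ and $\phi(v)$ differ in all $l$ coordinates. An $l$-encoding $\phi$ of $G$ is well-begun if the first coordinate of $\phi(v)$ lies in $\{0,1,\dots,\chi(G)-1\}$ for every vertex $v$, where $\chi(G)$ is the chromatic number of $G$. *)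

theory Defs
  imports Complex_Main
begin

definition simple_graph :: "'a set \<Rightarrow> 'a set set \<Rightarrow> bool" where
  "simple_graph V E \<longleftrightarrow> finite V \<and>
     (\<forall>e\<in>E. \<exists>u v. e = {u, v} \<and> u \<noteq> v \<and> u \<in> V \<and> v \<in> V)"

definition proper_colouring :: "'a set \<Rightarrow> 'a set set \<Rightarrow> ('a \<Rightarrow> nat) \<Rightarrow> nat \<Rightarrow> bool" where
  "proper_colouring V E c n \<longleftrightarrow> (\<forall>v\<in>V. c v < n) \<and>
     (\<forall>u\<in>V. \<forall>v\<in>V. {u, v} \<in> E \<longrightarrow> c u \<noteq> c v)"

definition chromatic_number :: "'a set \<Rightarrow> 'a set set \<Rightarrow> nat" where
  "chromatic_number V E = (LEAST n. \<exists>c. proper_colouring V E c n)"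

definition bipartite :: "'a set \<Rightarrow> 'a set set \<Rightarrow> bool" where
  "bipartite V E \<longleftrightarrow> (\<exists>c. proper_colouring V E c 2)"

definition encoding :: "'a set \<Rightarrow> 'a set set \<Rightarrow> nat \<Rightarrow> ('a \<Rightarrow> nat list) \<Rightarrow> bool" where
  "encoding V E l \<phi> \<longleftrightarrow> (\<forall>v\<in>V. length (\<phi> v) = l) \<and> inj_on \<phi> V \<and>
     (\<forall>u\<in>V. \<forall>v\<in>V. u \<noteq> v \<longrightarrow> ({u, v} \<in> E \<longleftrightarrow> (\<forall>i<l. \<phi> u ! i \<noteq> \<phi> v ! i)))"

definition well_begun_encoding :: "'a set \<Rightarrow> 'a set set \<Rightarrow> nat \<Rightarrow> ('a \<Rightarrow> nat list) \<Rightarrow> bool" where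
  "well_begun_encoding V E l \<phi> \<longleftrightarrow> encoding V E l \<phi> \<and> 0 < l \<and>
     (\<forall>v\<in>V. \<phi> v ! 0 < chromatic_number V E)"

end

theory Submission
  imports Defs "HOL-Combinatorics.Transposition"
begin

text \<open>
  Apply to each coordinate of \<open>\<phi>\<^sub>i\<close> the transposition exchanging the value at \<open>g\<close> with \<open>0\<close>, and
  pad to the common length \<open>L = max l\<^sub>i\<close> by repeating the first coordinate, which is a proper
  colouring with at most two colours; then every component codes \<open>g\<close> by the zero vector.
  Append \<open>\<lceil>log\<^sub>2 k\<rceil>\<close> coordinates: \<open>g\<close> gets \<open>0\<close>, and a vertex \<open>v \<noteq> g\<close> of \<open>G\<^sub>i\<close> with colour \<open>c\<close>
  gets \<open>1 + (c + i\<^sub>t) mod 2\<close> in coordinate \<open>t\<close>, where \<open>i\<^sub>t\<close> is the \<open>t\<close>-th binary digit of \<open>i\<close>.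
  Adjacent vertices of one component have different colours, so they differ in all new
  coordinates. For non-adjacent vertices \<open>\<noteq> g\<close> of different components, at a digit where
  their indices differ the new coordinates agree exactly when the colours differ; so they
  agree somewhere (there or in the colour coordinate) and also differ somewhere.
\<close>

lemma encoding_reindex:
  assumes enc: "encoding V E l \<phi>"
    and into: "\<forall>t<L. \<rho> t < l" and onto: "\<forall>s<l. \<exists>t<L. \<rho> t = s"
    and inj: "\<forall>t<L. inj (\<sigma> t)"
  shows "encoding V E L (\<lambda>v. map (\<lambda>t. \<sigma> t (\<phi> v ! \<rho> t)) [0..<L])"
proof -
  let ?\<psi> = "\<lambda>v. map (\<lambda>t. \<sigma> t (\<phi> v ! \<rho> t)) [0..<L]"
  have differ: "(\<forall>t<L. ?\<psi> u ! t \<noteq> ?\<psi> v ! t) \<longleftrightarrow> (\<forall>s<l. \<phi> u ! s \<noteq> \<phi> v ! s)" for u v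
    using into onto inj by (auto simp: inj_eq)
  have "\<phi> u = \<phi> v" if uv: "u \<in> V" "v \<in> V" and eq: "?\<psi> u = ?\<psi> v" for u v
  proof (rule nth_equalityI)
    show "length (\<phi> u) = length (\<phi> v)"
      using enc uv unfolding encoding_def by simp
    fix s assume "s < length (\<phi> u)"
    then obtain t where "t < L" "\<rho> t = s"
      using enc uv onto unfolding encoding_def by auto
    then show "\<phi> u ! s = \<phi> v ! s"
      using arg_cong[OF eq, of "\<lambda>xs. xs ! t"] inj by (auto simp: inj_eq)
  qed
  then show ?thesis
    using enc differ unfolding encoding_def inj_on_def by auto
qed

lemma binary_digit_differs:
  fixes i j :: nat
  assumes "i < 2 ^ m" "j < 2 ^ m" "i \<noteq> j"
  shows "\<exists>t<m. odd (i div 2 ^ t) \<noteq> odd (j div 2 ^ t)"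
proof -
  obtain t where t: "bit i t \<noteq> bit j t"
    using assms(3) bit_eq_iff by blast
  have "take_bit m i = i" "take_bit m j = j"
    using assms(1,2) take_bit_nat_eq_self_iff by blast+
  then have "t < m"
    using t by (metis bit_take_bit_iff)
  with t show ?thesis
    by (auto simp: bit_iff_odd)
qed

lemma le_two_power_ceiling_log:
  assumes "1 \<le> k"
  shows "k \<le> 2 ^ nat \<lceil>log 2 (real k)\<rceil>"
proof -
  have "real k = 2 powr log 2 (real k)"
    using assms by simp
  also have "\<dots> \<le> 2 powr nat \<lceil>log 2 (real k)\<rceil>"
    by (intro powr_mono) linarith+
  finally have "real k \<le> real (2 ^ nat \<lceil>log 2 (real k)\<rceil>)"
    by (simp add: powr_realpow)
  then show ?thesis
    by linarith
qed

lemma transpose_less: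
  fixes a b c :: nat
  shows "a < n \<Longrightarrow> b < n \<Longrightarrow> c < n \<Longrightarrow> transpose a b c < n"
  by (simp add: transpose_def)

definition normalise_encoding :: "'a \<Rightarrow> ('a \<Rightarrow> nat list) \<Rightarrow> nat \<Rightarrow> nat \<Rightarrow> 'a \<Rightarrow> nat list" where
  "normalise_encoding g \<phi> l L v =
     map (\<lambda>t. transpose (\<phi> g ! (if t < l then t else 0)) 0 (\<phi> v ! (if t < l then t else 0))) [0..<L]"

lemma encoding_normalise_encoding:
  assumes "encoding V E l \<phi>" "0 < l" "l \<le> L"
  shows "encoding V E L (normalise_encoding g \<phi> l L)"
  unfolding normalise_encoding_def
  by (rule encoding_reindex[where \<rho> = "\<lambda>t. if t < l then t else 0"
        and \<sigma> = "\<lambda>t. transpose (\<phi> g ! (if t < l then t else 0)) 0", OF assms(1)])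
    (use assms(2,3) in \<open>auto intro: inj_transpose\<close>)

lemma normalise_encoding_base: "normalise_encoding g \<phi> l L g = replicate L 0"
  by (simp add: normalise_encoding_def map_replicate_const)

lemma normalise_encoding_nth_0:
  "0 < l \<Longrightarrow> 0 < L \<Longrightarrow> normalise_encoding g \<phi> l L v ! 0 = transpose (\<phi> g ! 0) 0 (\<phi> v ! 0)"
  by (simp add: normalise_encoding_def)

lemma normalise_encoding_colour_less:
  assumes "well_begun_encoding V E l \<phi>" "g \<in> V" "v \<in> V" "l \<le> L"
  shows "normalise_encoding g \<phi> l L v ! 0 < chromatic_number V E"
proof -
  have "\<phi> g ! 0 < chromatic_number V E" "\<phi> v ! 0 < chromatic_number V E" "0 < l"
    using assms(1-3) unfolding well_begun_encoding_def by auto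
  then show ?thesis
    using assms(4) by (simp add: normalise_encoding_nth_0 transpose_less)
qed

definition index_code :: "nat \<Rightarrow> nat \<Rightarrow> nat \<Rightarrow> nat list" where
  "index_code m i c = map (\<lambda>t. 1 + (c + i div 2 ^ t) mod 2) [0..<m]"

lemma length_index_code [simp]: "length (index_code m i c) = m"
  by (simp add: index_code_def)

lemma index_code_nonzero: "t < m \<Longrightarrow> index_code m i c ! t \<noteq> 0"
  by (simp add: index_code_def)

lemma parity_add_eq_iff:
  fixes c c' x y :: nat
  assumes "c < 2" "c' < 2"
  shows "(c + x) mod 2 = (c' + y) mod 2 \<longleftrightarrow> (c = c' \<longleftrightarrow> odd x = odd y)"
  using assms by (auto simp: less_2_cases_iff mod2_eq_if)

lemma index_code_colours_differ:
  assumes "c < 2" "c' < 2" "c \<noteq> c'" "t < m"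
  shows "index_code m i c ! t \<noteq> index_code m i c' ! t"
  using assms parity_add_eq_iff[of c c'] by (simp add: index_code_def)

lemma index_code_indices_differ:
  assumes "i < 2 ^ m" "j < 2 ^ m" "i \<noteq> j" "c < 2" "c' < 2"
  shows "\<exists>t<m. index_code m i c ! t = index_code m j c' ! t \<longleftrightarrow> c \<noteq> c'"
proof -
  obtain t where "t < m" "odd (i div 2 ^ t) \<noteq> odd (j div 2 ^ t)"
    using binary_digit_differs assms(1-3) by blast
  then show ?thesis
    using parity_add_eq_iff[OF assms(4,5)] by (intro exI[of _ t]) (simp add: index_code_def)
qed

lemma chromatic_number_le:
  "proper_colouring V E c n \<Longrightarrow> chromatic_number V E \<le> n"
  unfolding chromatic_number_def by (auto intro: Least_le)

lemma chromatic_number_subgraph_le: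
  assumes "V' \<subseteq> V" "E' \<subseteq> E" "proper_colouring V E c n"
  shows "chromatic_number V' E' \<le> chromatic_number V E"
proof -
  obtain c' where "proper_colouring V E c' (chromatic_number V E)"
    using LeastI_ex[of "\<lambda>n. \<exists>c. proper_colouring V E c n"] assms(3)
    unfolding chromatic_number_def by blast
  then have "proper_colouring V' E' c' (chromatic_number V E)"
    using assms(1,2) unfolding proper_colouring_def by blast
  then show ?thesis
    by (rule chromatic_number_le)
qed

lemma simple_graph_UN:
  assumes "finite I" "\<forall>i\<in>I. simple_graph (V i) (E i)"
  shows "simple_graph (\<Union>i\<in>I. V i) (\<Union>i\<in>I. E i)"
  unfolding simple_graph_def
proof (intro conjI ballI)
  show "finite (\<Union>i\<in>I. V i)"
    using assms unfolding simple_graph_def by simp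
next
  fix e assume "e \<in> (\<Union>i\<in>I. E i)"
  then obtain i where i: "i \<in> I" "e \<in> E i"
    by blast
  then obtain u v where "e = {u, v}" "u \<noteq> v" "u \<in> V i" "v \<in> V i"
    using assms(2) unfolding simple_graph_def by blast
  then show "\<exists>u v. e = {u, v} \<and> u \<noteq> v \<and> u \<in> (\<Union>i\<in>I. V i) \<and> v \<in> (\<Union>i\<in>I. V i)"
    using i(1) by blast
qed

lemma encoding_proper_colouring:
  assumes "simple_graph V E" "encoding V E l \<phi>" "0 < l" "\<forall>v\<in>V. \<phi> v ! 0 < n"
  shows "proper_colouring V E (\<lambda>v. \<phi> v ! 0) n"
  unfolding proper_colouring_def
proof (intro conjI ballI impI)
  fix u v assume uv: "u \<in> V" "v \<in> V" "{u, v} \<in> E"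
  then have "u \<noteq> v"
    using assms(1) unfolding simple_graph_def by (metis doubleton_eq_iff)
  then show "\<phi> u ! 0 \<noteq> \<phi> v ! 0"
    using uv assms(2,3) unfolding encoding_def by blast
qed (use assms(4) in blast)

locale one_point_union =
  fixes k :: nat and V :: "nat \<Rightarrow> 'a set" and E :: "nat \<Rightarrow> 'a set set" and g :: 'a
    and L m :: nat and \<psi> :: "nat \<Rightarrow> 'a \<Rightarrow> nat list"
  assumes simple: "\<And>i. i < k \<Longrightarrow> simple_graph (V i) (E i)"
    and bipartite: "\<And>i. i < k \<Longrightarrow> bipartite (V i) (E i)"
    and base_mem: "\<And>i. i < k \<Longrightarrow> g \<in> V i"
    and meet: "\<And>i j. i < k \<Longrightarrow> j < k \<Longrightarrow> i \<noteq> j \<Longrightarrow> V i \<inter> V j \<subseteq> {g}"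
    and enc: "\<And>i. i < k \<Longrightarrow> encoding (V i) (E i) L (\<psi> i)"
    and base_zero: "\<And>i. i < k \<Longrightarrow> \<psi> i g = replicate L 0"
    and colour_less: "\<And>i v. i < k \<Longrightarrow> v \<in> V i \<Longrightarrow> \<psi> i v ! 0 < chromatic_number (V i) (E i)"
    and L_pos: "0 < L"
    and k_le: "k \<le> 2 ^ m"
begin

lemma colour_less_2: "i < k \<Longrightarrow> v \<in> V i \<Longrightarrow> \<psi> i v ! 0 < 2"
  using colour_less[of i v] bipartite[of i] chromatic_number_le[of "V i" "E i" _ 2]
  unfolding bipartite_def by fastforce

definition tag :: "nat \<Rightarrow> 'a \<Rightarrow> nat list" where
  "tag i v = (if v = g then replicate m 0 else index_code m i (\<psi> i v ! 0))"

definition code :: "nat \<Rightarrow> 'a \<Rightarrow> nat list" where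
  "code i v = \<psi> i v @ tag i v"

lemma nth_code:
  "i < k \<Longrightarrow> v \<in> V i \<Longrightarrow> code i v ! t = (if t < L then \<psi> i v ! t else tag i v ! (t - L))"
  using enc unfolding code_def encoding_def by (simp add: nth_append)

text \<open>Well defined at the shared vertex \<open>g\<close> because every component codes it by zeros.\<close>

definition glued :: "'a \<Rightarrow> nat list" where
  "glued v = code (SOME i. i < k \<and> v \<in> V i) v"

lemma glued_eq:
  assumes "i < k" "v \<in> V i"
  shows "glued v = code i v"
proof -
  define j where "j = (SOME i. i < k \<and> v \<in> V i)"
  have j: "j < k" "v \<in> V j"
    unfolding j_def using someI[of "\<lambda>i. i < k \<and> v \<in> V i"] assms by blast+
  show ?thesis
  proof (cases "j = i")
    case False
    then have "v = g"
      using meet[OF j(1) assms(1)] j(2) assms(2) by blast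
    then show ?thesis
      using j assms unfolding glued_def j_def[symmetric] code_def tag_def by (simp add: base_zero)
  qed (simp add: glued_def j_def)
qed

lemma length_code: "i < k \<Longrightarrow> v \<in> V i \<Longrightarrow> length (code i v) = L + m"
  using enc unfolding code_def tag_def encoding_def by simp

lemma glued_nth_0: "i < k \<Longrightarrow> v \<in> V i \<Longrightarrow> glued v ! 0 = \<psi> i v ! 0"
  using glued_eq nth_code L_pos by simp

lemma edge_in_component:
  assumes "{u, v} \<in> (\<Union>i<k. E i)" "i < k" "u \<in> V i" "v \<in> V i" "u \<noteq> v"
  shows "{u, v} \<in> E i"
proof -
  obtain j where j: "j < k" "{u, v} \<in> E j"
    using assms(1) by blast
  then have "u \<in> V j" "v \<in> V j"
    using simple[OF j(1)] unfolding simple_graph_def by (auto simp: doubleton_eq_iff)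
  then have "j = i"
    using meet[OF assms(2) j(1)] assms(3-5) by blast
  with j show ?thesis
    by simp
qed

lemma edge_imp_common_component:
  assumes "{u, v} \<in> (\<Union>i<k. E i)"
  shows "\<exists>i<k. u \<in> V i \<and> v \<in> V i"
  using assms simple unfolding simple_graph_def by (fastforce simp: doubleton_eq_iff)

lemma code_differ_iff:
  assumes i: "i < k" and uv: "u \<in> V i" "v \<in> V i" "u \<noteq> v"
  shows "(\<forall>t<L+m. code i u ! t \<noteq> code i v ! t) \<longleftrightarrow> (\<forall>t<L. \<psi> i u ! t \<noteq> \<psi> i v ! t)"
proof
  assume differ: "\<forall>t<L. \<psi> i u ! t \<noteq> \<psi> i v ! t"
  then have colours: "\<psi> i u ! 0 \<noteq> \<psi> i v ! 0"
    using L_pos by blast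
  have tags: "tag i u ! s \<noteq> tag i v ! s" if s: "s < m" for s
  proof -
    consider "u = g" | "v = g" | "u \<noteq> g" "v \<noteq> g"
      by blast
    then show ?thesis
    proof cases
      case 1
      then show ?thesis
        using s uv(3) index_code_nonzero[OF s, of i] by (simp add: tag_def)
    next
      case 2
      then show ?thesis
        using s uv(3) index_code_nonzero[OF s, of i] by (simp add: tag_def)
    next
      case 3
      then have "tag i u = index_code m i (\<psi> i u ! 0)" "tag i v = index_code m i (\<psi> i v ! 0)"
        by (simp_all add: tag_def)
      with index_code_colours_differ[OF colour_less_2[OF i uv(1)] colour_less_2[OF i uv(2)] colours s]
      show ?thesis
        by simp
    qed
  qed
  show "\<forall>t<L+m. code i u ! t \<noteq> code i v ! t"
  proof (intro allI impI)
    fix t assume "t < L + m"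
    then show "code i u ! t \<noteq> code i v ! t"
      using differ tags[of "t - L"]
      by (cases "t < L") (simp_all add: nth_code[OF i uv(1)] nth_code[OF i uv(2)])
  qed
next
  assume differ: "\<forall>t<L+m. code i u ! t \<noteq> code i v ! t"
  show "\<forall>t<L. \<psi> i u ! t \<noteq> \<psi> i v ! t"
  proof (intro allI impI)
    fix t assume "t < L"
    then show "\<psi> i u ! t \<noteq> \<psi> i v ! t"
      using differ[rule_format, of t] by (simp add: nth_code[OF i uv(1)] nth_code[OF i uv(2)])
  qed
qed

lemma code_different_components:
  assumes ij: "i < k" "j < k" "i \<noteq> j" and uv: "u \<in> V i" "v \<in> V j" "u \<noteq> g" "v \<noteq> g"
  shows "(\<exists>t<L+m. code i u ! t = code j v ! t) \<and> (\<exists>t<L+m. code i u ! t \<noteq> code j v ! t)"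
proof -
  let ?c = "\<psi> i u ! 0" and ?c' = "\<psi> j v ! 0"
  obtain t where t: "t < m" "index_code m i ?c ! t = index_code m j ?c' ! t \<longleftrightarrow> ?c \<noteq> ?c'"
    using index_code_indices_differ[of i m j ?c ?c'] ij k_le colour_less_2 uv by auto
  have first: "code i u ! 0 = ?c" "code j v ! 0 = ?c'"
    using L_pos nth_code ij uv by simp_all
  have tagged: "code i u ! (L + t) = index_code m i ?c ! t" "code j v ! (L + t) = index_code m j ?c' ! t"
    using nth_code ij uv unfolding tag_def by simp_all
  have bounds: "0 < L + m" "L + t < L + m"
    using L_pos t(1) by simp_all
  show ?thesis
  proof (cases "?c = ?c'")
    case True
    then have "code i u ! 0 = code j v ! 0" "code i u ! (L + t) \<noteq> code j v ! (L + t)"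
      using first tagged t(2) by simp_all
    then show ?thesis
      using bounds by blast
  next
    case False
    then have "code i u ! (L + t) = code j v ! (L + t)" "code i u ! 0 \<noteq> code j v ! 0"
      using first tagged t(2) by simp_all
    then show ?thesis
      using bounds by blast
  qed
qed

lemma encoding_glued: "encoding (\<Union>i<k. V i) (\<Union>i<k. E i) (L + m) glued"
  unfolding encoding_def
proof (intro conjI ballI impI)
  fix v assume "v \<in> (\<Union>i<k. V i)"
  then show "length (glued v) = L + m"
    using glued_eq length_code by auto
next
  have "({u, v} \<in> (\<Union>i<k. E i) \<longleftrightarrow> (\<forall>t<L+m. glued u ! t \<noteq> glued v ! t)) \<and> glued u \<noteq> glued v"
    if uv: "u \<in> (\<Union>i<k. V i)" "v \<in> (\<Union>i<k. V i)" "u \<noteq> v" for u v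
  proof (cases "\<exists>i<k. u \<in> V i \<and> v \<in> V i")
    case True
    then obtain i where i: "i < k" "u \<in> V i" "v \<in> V i"
      by blast
    have "{u, v} \<in> (\<Union>i<k. E i) \<longleftrightarrow> {u, v} \<in> E i"
      using edge_in_component i uv(3) by blast
    also have "\<dots> \<longleftrightarrow> (\<forall>t<L. \<psi> i u ! t \<noteq> \<psi> i v ! t)"
      using enc[OF i(1)] i uv(3) unfolding encoding_def by blast
    also have "\<dots> \<longleftrightarrow> (\<forall>t<L+m. glued u ! t \<noteq> glued v ! t)"
      using code_differ_iff[OF i uv(3)] glued_eq i by simp
    finally show ?thesis
      using enc[OF i(1)] i uv(3) glued_eq unfolding encoding_def inj_on_def code_def by auto
  next
    case False
    then obtain i j where ij: "i < k" "j < k" "i \<noteq> j" "u \<in> V i" "v \<in> V j" "u \<noteq> g" "v \<noteq> g"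
      using uv(1,2) base_mem by blast
    then show ?thesis
      using code_different_components[OF ij] edge_imp_common_component False glued_eq by metis
  qed
  then show "inj_on glued (\<Union>i<k. V i)"
    and "\<And>u v. u \<in> (\<Union>i<k. V i) \<Longrightarrow> v \<in> (\<Union>i<k. V i) \<Longrightarrow> u \<noteq> v \<Longrightarrow>
           {u, v} \<in> (\<Union>i<k. E i) \<longleftrightarrow> (\<forall>t<L+m. glued u ! t \<noteq> glued v ! t)"
    unfolding inj_on_def by blast+
qed

lemma well_begun_encoding_glued:
  "well_begun_encoding (\<Union>i<k. V i) (\<Union>i<k. E i) (L + m) glued"
proof -
  have "proper_colouring (\<Union>i<k. V i) (\<Union>i<k. E i) (\<lambda>v. glued v ! 0) 2"
    using simple_graph_UN[of "{..<k}" V E] simple encoding_glued L_pos glued_nth_0 colour_less_2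
    by (intro encoding_proper_colouring[where l = "L + m"]) auto
  then have "chromatic_number (V i) (E i) \<le> chromatic_number (\<Union>i<k. V i) (\<Union>i<k. E i)" if "i < k" for i
    using that by (intro chromatic_number_subgraph_le) auto
  then have "glued v ! 0 < chromatic_number (\<Union>i<k. V i) (\<Union>i<k. E i)" if "i < k" "v \<in> V i" for i v
    using glued_nth_0[OF that] colour_less[OF that] that(1) by (metis less_le_trans)
  then show ?thesis
    unfolding well_begun_encoding_def using encoding_glued L_pos by blast
qed

end

lemma one_point_union_normalise_encoding:
  assumes graphs: "\<forall>i<k. simple_graph (V i) (E i) \<and> bipartite (V i) (E i)"
    and base: "\<forall>i<k. g \<in> V i"
    and meet: "\<forall>i<k. \<forall>j<k. i \<noteq> j \<longrightarrow> V i \<inter> V j \<subseteq> {g}"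
    and well_begun: "\<forall>i<k. well_begun_encoding (V i) (E i) (ls i) (\<phi>s i)"
    and ls_le: "\<forall>i<k. ls i \<le> L"
    and "0 < L" "k \<le> 2 ^ m"
  shows "one_point_union k V E g L m (\<lambda>i. normalise_encoding g (\<phi>s i) (ls i) L)"
proof
  show "simple_graph (V i) (E i)" "bipartite (V i) (E i)" "g \<in> V i" if "i < k" for i
    using graphs base that by auto
  show "V i \<inter> V j \<subseteq> {g}" if "i < k" "j < k" "i \<noteq> j" for i j
    using meet that by blast
  show "encoding (V i) (E i) L (normalise_encoding g (\<phi>s i) (ls i) L)" if "i < k" for i
    using well_begun ls_le that
    by (intro encoding_normalise_encoding) (auto simp: well_begun_encoding_def)
  show "normalise_encoding g (\<phi>s i) (ls i) L g = replicate L 0" for i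
    by (rule normalise_encoding_base)
  show "normalise_encoding g (\<phi>s i) (ls i) L v ! 0 < chromatic_number (V i) (E i)"
    if "i < k" "v \<in> V i" for i v
    using well_begun base ls_le that by (intro normalise_encoding_colour_less) auto
qed fact+

theorem lemma2:
  fixes k :: nat and V :: "nat \<Rightarrow> 'a set" and E :: "nat \<Rightarrow> 'a set set"
    and g :: 'a and ls :: "nat \<Rightarrow> nat" and \<phi>s :: "nat \<Rightarrow> 'a \<Rightarrow> nat list"
  assumes "k \<ge> 1"
    and "\<forall>i<k. simple_graph (V i) (E i) \<and> bipartite (V i) (E i)"
    and "\<forall>i<k. \<forall>j<k. i \<noteq> j \<longrightarrow> V i \<inter> V j = {g}"
    and "\<forall>i<k. well_begun_encoding (V i) (E i) (ls i) (\<phi>s i)"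
  shows "\<exists>\<phi>. well_begun_encoding (\<Union>i<k. V i) (\<Union>i<k. E i)
            (Max (ls ` {..<k}) + nat \<lceil>log 2 (real k)\<rceil>) \<phi>"
proof (cases "k = 1")
  case True
  then have "{..<k} = {0}"
    by auto
  then show ?thesis
    using assms(4) True by (intro exI[of _ "\<phi>s 0"]) auto
next
  case False
  define L where "L = Max (ls ` {..<k})"
  have base: "g \<in> V i" if "i < k" for i
  proof -
    have "(if i = 0 then 1 else 0) < k" "(if i = 0 then 1 else 0) \<noteq> i"
      using False assms(1) that by auto
    then show ?thesis
      using assms(3) that by blast
  qed
  have ls_le: "\<forall>i<k. ls i \<le> L"
    unfolding L_def by simp
  moreover have "0 < L"
    using assms(1,4) ls_le unfolding well_begun_encoding_def by (metis less_le_trans less_one)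
  ultimately have "one_point_union k V E g L (nat \<lceil>log 2 (real k)\<rceil>) (\<lambda>i. normalise_encoding g (\<phi>s i) (ls i) L)"
    using assms base le_two_power_ceiling_log[OF assms(1)]
    by (intro one_point_union_normalise_encoding) auto
  then show ?thesis
    unfolding L_def by (blast intro: one_point_union.well_begun_encoding_glued)
qed

end
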